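(* Let $X\subseteq\{0,1\}^n$ be a nonempty set, let $U\subseteq\mathbb{R}^{n+1}$ be a nonempty compact set, and define $f(x):=\max_{(c_0,c)\in U}\, c^\top x+c_0$ for $x\in\mathbb{R}^n$. Consider an iteration $k$ of Algorithm SD-DROP (described in the context) in which the algorithm does not terminate. Let $L$ be an affine subspace of $\mathbb{R}^n$ containing $x^k$ such that (i) the restriction $f|_L$ is differentiable at $x^k$, (ii) $\dim(L\cap\operatorname{aff}(V^{k+1}))\ge 1$, and (iii) $c^k$ is not orthogonal to $L\cap\operatorname{aff}(V^{k+1})$. Then $f(x^{k+1})<f(x^k)$.
   Context: For a convex function $f$, $\partial f(x)$ denotes its subdifferential at $x$. For a convex set $C$ and $x\in C$, $\mathcal{N}_C(x)=\{d\in\mathbb{R}^n: d^\top(y-x)\le 0\ \forall y\in C\}$ is the normal cone of $C$ at $x$; $\operatorname{aff}$ denotes affine hull. "$c^k$ not orthogonal to $L\cap\operatorname{aff}(V^{k+1})$" means $c^k$ is not orthogonal to the linear subspace parallel to this affine set. Algorithm SD-DROP: pick any $\hat x^0\in X$ and set $V^1=\{\hat x^0\}$. For $k=1,2,\dots$: compute $\alpha^k\in\mathbb{R}^{V^k}_+$ with $\sum_{v\in V^k}\alpha^k_v=1$, the point $x^k=\sum_{v\in V^k}\alpha^k_v v$, and a vector $c^k\in\partial f(x^k)\cap(-\mathcal{N}_{\operatorname{conv}(V^k)}(x^k))$ (so $x^k$ minimizes $f$ over $\operatorname{conv}(V^k)$); then compute a minimizer $\hat x^k$ of $\min_{x\in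 X}(c^k)^\top x$. If $(c^k)^\top\hat x^k\ge (c^k)^\top x^k$, stop and output $x^k$; otherwise set $V^{k+1}:=\{v\in V^k:\alpha^k_v>0\}\cup\{\hat x^k\}$ and continue. *)

theory Defs
  imports "HOL-Analysis.Analysis"
begin

text \<open>The objective f(x) = max over (c0,c) in U of c.x + c0; U is a set of pairs (c0, c)
  representing points of R^(n+1). For compact nonempty U the supremum is attained (a max).\<close>
definition sd_f :: "(real \<times> (real^'n)) set \<Rightarrow> real^'n \<Rightarrow> real" where
  "sd_f U x = (SUP p\<in>U. snd p \<bullet> x + fst p)"

definition subdiff :: "(real^'n \<Rightarrow> real) \<Rightarrow> real^'n \<Rightarrow> (real^'n) set" where
  "subdiff f x = {g. \<forall>y. f x + g \<bullet> (y - x) \<le> f y}"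

definition normal_cone :: "(real^'n) set \<Rightarrow> real^'n \<Rightarrow> (real^'n) set" where
  "normal_cone C x = {d. \<forall>y\<in>C. d \<bullet> (y - x) \<le> 0}"

end

theory Submission
  imports Defs
begin

(* Every point of the support S of x_k lies in the face of conv V_k on which c_k is
   minimised at x_k, so c_k is constant on S. A direction of L \<inter> aff V_(k+1) not orthogonal
   to c_k therefore has to use the new vertex xh_k, and after fixing its sign it is a feasible
   direction at x_k into conv V_(k+1) along which c_k decreases. Since f restricted to L is
   differentiable at x_k, the subgradient c_k gives the derivative of f along this direction,
   so f drops strictly somewhere in conv V_(k+1); and x_(k+1) minimises f over that set. *)

lemma subdiff_neg_normal_cone_minimal:
  assumes "g \<in> subdiff f x \<inter> uminus ` normal_cone C x" and "p \<in> C"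
  shows "f x \<le> f p"
proof -
  obtain n where n: "n \<in> normal_cone C x" "g = - n" and g: "g \<in> subdiff f x"
    using assms(1) by auto
  have "n \<bullet> (p - x) \<le> 0"
    using n(1) assms(2) unfolding normal_cone_def by blast
  moreover have "f x + g \<bullet> (p - x) \<le> f p"
    using g unfolding subdiff_def by blast
  ultimately show ?thesis using n(2) by simp
qed

lemma neg_normal_cone_convex_hull_le:
  assumes "c \<in> uminus ` normal_cone (convex hull V) x" and "v \<in> V"
  shows "c \<bullet> x \<le> c \<bullet> v"
proof -
  obtain n where "n \<in> normal_cone (convex hull V) x" "c = - n"
    using assms(1) by auto
  moreover have "v \<in> convex hull V" using assms(2) by (rule hull_inc)
  ultimately show ?thesis unfolding normal_cone_def by (force simp: inner_diff_right)
qed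

lemma convex_combination_support:
  fixes V :: "'a::real_vector set"
  assumes "sum \<alpha> V = 1" "x = (\<Sum>v\<in>V. \<alpha> v *\<^sub>R v)" "\<forall>v\<in>V. 0 \<le> \<alpha> v"
  defines "S \<equiv> {v \<in> V. 0 < \<alpha> v}"
  shows "finite S" "sum \<alpha> S = 1" "x = (\<Sum>v\<in>S. \<alpha> v *\<^sub>R v)"
proof -
  have fin: "finite V"
    using assms(1) by (metis sum.infinite zero_neq_one)
  then show "finite S" unfolding S_def by simp
  have zero: "\<forall>v\<in>V - S. \<alpha> v = 0"
    using assms(3) unfolding S_def by force
  have "S \<subseteq> V" unfolding S_def by blast
  show "sum \<alpha> S = 1"
    using assms(1) sum.mono_neutral_right[OF fin \<open>S \<subseteq> V\<close>, of \<alpha>] zero by simp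
  show "x = (\<Sum>v\<in>S. \<alpha> v *\<^sub>R v)"
    using assms(2) sum.mono_neutral_right[OF fin \<open>S \<subseteq> V\<close>, of "\<lambda>v. \<alpha> v *\<^sub>R v"] zero
    by simp
qed

lemma sum_scaled_inner_diff:
  fixes c x :: "'a::real_inner"
  shows "(\<Sum>v\<in>T. b v * (c \<bullet> v - c \<bullet> x)) = c \<bullet> (\<Sum>v\<in>T. b v *\<^sub>R v) - sum b T * (c \<bullet> x)"
  by (simp add: right_diff_distrib sum_subtractf sum_distrib_right inner_sum_right)

lemma inner_eq_on_support:
  fixes c x :: "'a::real_inner"
  assumes "\<forall>v\<in>V. 0 \<le> \<alpha> v" "sum \<alpha> V = 1" "x = (\<Sum>v\<in>V. \<alpha> v *\<^sub>R v)"
    and min: "\<forall>v\<in>V. c \<bullet> x \<le> c \<bullet> v"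
    and v: "v \<in> V" "0 < \<alpha> v"
  shows "c \<bullet> v = c \<bullet> x"
proof -
  have fin: "finite V"
    using assms(2) by (metis sum.infinite zero_neq_one)
  have "(\<Sum>w\<in>V. \<alpha> w * (c \<bullet> w - c \<bullet> x)) = 0"
    using assms(2,3) by (simp add: sum_scaled_inner_diff)
  moreover have "\<forall>w\<in>V. 0 \<le> \<alpha> w * (c \<bullet> w - c \<bullet> x)"
    using assms(1) min by simp
  ultimately have "\<forall>w\<in>V. \<alpha> w * (c \<bullet> w - c \<bullet> x) = 0"
    using sum_nonneg_eq_0_iff[OF fin, of "\<lambda>w. \<alpha> w * (c \<bullet> w - c \<bullet> x)"] by blast
  then show ?thesis using v by fastforce
qed

lemma affine_hull_finite_diff:
  assumes "finite T" "y \<in> affine hull T" "z \<in> affine hull T"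
  obtains b where "sum b T = 0" "y - z = (\<Sum>v\<in>T. b v *\<^sub>R v)"
proof -
  obtain \<mu> where \<mu>: "sum \<mu> T = 1" "(\<Sum>v\<in>T. \<mu> v *\<^sub>R v) = y"
    using assms(2) unfolding affine_hull_finite[OF assms(1)] by blast
  obtain \<nu> where \<nu>: "sum \<nu> T = 1" "(\<Sum>v\<in>T. \<nu> v *\<^sub>R v) = z"
    using assms(3) unfolding affine_hull_finite[OF assms(1)] by blast
  show ?thesis
  proof (rule that)
    show "sum (\<lambda>v. \<mu> v - \<nu> v) T = 0"
      using \<mu> \<nu> by (simp add: sum_subtractf)
    show "y - z = (\<Sum>v\<in>T. (\<mu> v - \<nu> v) *\<^sub>R v)"
      using \<mu> \<nu> by (simp add: scaleR_diff_left sum_subtractf)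
  qed
qed

lemma eventually_in_convex_hull_along_direction:
  fixes T :: "'a::real_vector set"
  assumes fin: "finite T" and a0: "\<forall>v\<in>T. 0 \<le> a v" and a1: "sum a T = 1"
    and b0: "sum b T = 0" and ab: "\<forall>v\<in>T. a v = 0 \<longrightarrow> 0 \<le> b v"
  shows "eventually (\<lambda>t. (\<Sum>v\<in>T. a v *\<^sub>R v) + t *\<^sub>R (\<Sum>v\<in>T. b v *\<^sub>R v) \<in> convex hull T)
           (at_right 0)"
proof -
  have "eventually (\<lambda>t. 0 \<le> a v + t * b v) (at_right (0::real))" if v: "v \<in> T" for v
  proof (cases "a v = 0")
    case True
    then show ?thesis
      using ab v unfolding eventually_at_right_field by (intro exI[of _ 1]) simp
  next
    case False
    then have "a v + 0 * b v > 0" using a0 v by force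
    moreover have "((\<lambda>t. a v + t * b v) \<longlongrightarrow> a v + 0 * b v) (at_right (0::real))"
      by (intro tendsto_intros)
    ultimately have "eventually (\<lambda>t. a v + t * b v > 0) (at_right (0::real))"
      by (rule order_tendstoD(1)[rotated])
    then show ?thesis by eventually_elim simp
  qed
  then have "eventually (\<lambda>t. \<forall>v\<in>T. 0 \<le> a v + t * b v) (at_right (0::real))"
    by (rule eventually_ball_finite[OF fin, rule_format])
  then show ?thesis
  proof eventually_elim
    case (elim t)
    have "(\<Sum>v\<in>T. a v *\<^sub>R v) + t *\<^sub>R (\<Sum>v\<in>T. b v *\<^sub>R v) = (\<Sum>v\<in>T. (a v + t * b v) *\<^sub>R v)"
      by (simp add: scaleR_sum_right sum.distrib scaleR_add_left)
    moreover have "(\<Sum>v\<in>T. a v + t * b v) = 1"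
      using a1 b0 by (simp add: sum.distrib sum_distrib_left[symmetric])
    ultimately show ?case
      unfolding convex_hull_finite[OF fin] mem_Collect_eq
      by (intro exI[of _ "\<lambda>v. a v + t * b v"]) (use elim in simp)
  qed
qed

lemma exists_feasible_descent_direction:
  fixes c x w y z :: "'a::real_inner"
  assumes fin: "finite S" and a0: "\<forall>v\<in>S. 0 < a v" and a1: "sum a S = 1"
    and x: "x = (\<Sum>v\<in>S. a v *\<^sub>R v)"
    and flat: "\<forall>v\<in>S. c \<bullet> v = c \<bullet> x" and w: "c \<bullet> w < c \<bullet> x"
    and y: "y \<in> affine hull (insert w S)" and z: "z \<in> affine hull (insert w S)"
    and nonorth: "c \<bullet> (y - z) \<noteq> 0"
  obtains s where
    "eventually (\<lambda>t. x + t *\<^sub>R (s *\<^sub>R (y - z)) \<in> convex hull (insert w S)) (at_right 0)"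
    "c \<bullet> (s *\<^sub>R (y - z)) < 0"
proof -
  let ?T = "insert w S"
  obtain b where b0: "sum b ?T = 0" and yz: "y - z = (\<Sum>v\<in>?T. b v *\<^sub>R v)"
    using affine_hull_finite_diff[of ?T y z] fin y z by auto
  have c_yz: "c \<bullet> (y - z) = (\<Sum>v\<in>?T. b v * (c \<bullet> v - c \<bullet> x))"
    using b0 yz by (simp add: sum_scaled_inner_diff)
  have flat_sum: "(\<Sum>v\<in>S. b v * (c \<bullet> v - c \<bullet> x)) = 0"
    using flat by simp
  have "w \<notin> S"
  proof
    assume "w \<in> S"
    then have "?T = S" by blast
    then show False using c_yz flat_sum nonorth by simp
  qed
  then have c_yz_w: "c \<bullet> (y - z) = b w * (c \<bullet> w - c \<bullet> x)"
    using c_yz flat_sum fin by simp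
  define s where "s = sgn (b w)"
  have s_pos: "0 < s * b w"
    using nonorth c_yz_w by (auto simp: s_def sgn_real_def)
  define a' where "a' v = (if v \<in> S then a v else 0)" for v
  have "eventually (\<lambda>t. (\<Sum>v\<in>?T. a' v *\<^sub>R v) + t *\<^sub>R (\<Sum>v\<in>?T. (s * b v) *\<^sub>R v)
          \<in> convex hull ?T) (at_right 0)"
  proof (rule eventually_in_convex_hull_along_direction)
    show "sum a' ?T = 1"
      using a1 fin \<open>w \<notin> S\<close> by (simp add: a'_def cong: sum.cong)
    show "sum (\<lambda>v. s * b v) ?T = 0"
      using b0 by (simp add: sum_distrib_left[symmetric])
    show "\<forall>v\<in>?T. a' v = 0 \<longrightarrow> 0 \<le> s * b v"
      using a0 s_pos by (auto simp: a'_def)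
  qed (use fin a0 in \<open>auto simp: a'_def less_imp_le\<close>)
  moreover have "(\<Sum>v\<in>?T. a' v *\<^sub>R v) = x"
    using x fin \<open>w \<notin> S\<close> by (simp add: a'_def cong: sum.cong)
  moreover have "(\<Sum>v\<in>?T. (s * b v) *\<^sub>R v) = s *\<^sub>R (y - z)"
    using yz by (simp add: scaleR_sum_right)
  moreover have "c \<bullet> (s *\<^sub>R (y - z)) < 0"
    using c_yz_w mult_pos_neg[OF s_pos, of "c \<bullet> w - c \<bullet> x"] w by (simp add: mult.assoc)
  ultimately show ?thesis using that by simp
qed

text \<open>The derivative is g \<bullet> d because t \<mapsto> f (x + t d) - t (g \<bullet> d) has a minimum at 0.\<close>

lemma has_derivative_subgradient_along_line:
  fixes f :: "'a::real_inner \<Rightarrow> real"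
  assumes D: "(f has_derivative D) (at x within L)"
    and line: "\<And>t. x + t *\<^sub>R d \<in> L"
    and sub: "\<And>t. f x + g \<bullet> (t *\<^sub>R d) \<le> f (x + t *\<^sub>R d)"
  shows "((\<lambda>t. f (x + t *\<^sub>R d)) has_real_derivative g \<bullet> d) (at 0)"
proof -
  define l where "l t = x + t *\<^sub>R d" for t :: real
  have "(l has_derivative (\<lambda>t. t *\<^sub>R d)) (at 0)"
    unfolding l_def by (auto intro!: derivative_eq_intros)
  moreover have "range l \<subseteq> L"
    using line by (auto simp: l_def)
  then have "(f has_derivative D) (at (l 0) within range l)"
    using has_derivative_subset[OF D] by (simp add: l_def)
  ultimately have "((f \<circ> l) has_derivative D \<circ> (\<lambda>t. t *\<^sub>R d)) (at 0)"
    using diff_chain_within[of l _ 0 UNIV f D] by simp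
  moreover have "D \<circ> (\<lambda>t. t *\<^sub>R d) = (*) (D d)"
    using linear_scale[OF has_derivative_linear[OF D]] by (auto simp: fun_eq_iff)
  ultimately have Df: "((f \<circ> l) has_real_derivative D d) (at 0)"
    unfolding has_field_derivative_def by (simp only:)
  have "((\<lambda>t. (f \<circ> l) t - t * (g \<bullet> d)) has_real_derivative D d - g \<bullet> d) (at 0)"
    by (intro DERIV_diff Df) (auto intro!: derivative_eq_intros)
  moreover have "(f \<circ> l) 0 - 0 * (g \<bullet> d) \<le> (f \<circ> l) t - t * (g \<bullet> d)" for t
    using sub[of t] by (simp add: l_def)
  ultimately have "D d - g \<bullet> d = 0"
    by (intro DERIV_local_min[of _ _ 0 1]) auto
  then show ?thesis using Df by (simp add: l_def o_def)
qed

lemma eventually_descent_along_line: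
  assumes "f differentiable (at x within L)"
    and "\<And>t. x + t *\<^sub>R d \<in> L"
    and "g \<in> subdiff f x" and "g \<bullet> d < 0"
  shows "eventually (\<lambda>t. f (x + t *\<^sub>R d) < f x) (at_right 0)"
proof -
  obtain D where D: "(f has_derivative D) (at x within L)"
    using assms(1) unfolding differentiable_def by blast
  have "f x + g \<bullet> (t *\<^sub>R d) \<le> f (x + t *\<^sub>R d)" for t
    using assms(3)[unfolded subdiff_def, THEN CollectD, THEN spec, of "x + t *\<^sub>R d"] by simp
  from has_real_derivative_neg_dec_right[OF
      has_derivative_subgradient_along_line[OF D assms(2) this] assms(4)]
  obtain e where "e > 0" "\<forall>h>0. h < e \<longrightarrow> f (x + h *\<^sub>R d) < f x"
    by auto
  then show ?thesis
    unfolding eventually_at_right_field by blast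
qed

theorem lemma3:
  fixes X :: "(real^'n) set"
    and U :: "(real \<times> (real^'n)) set"
    and V :: "nat \<Rightarrow> (real^'n) set"
    and \<alpha> :: "nat \<Rightarrow> real^'n \<Rightarrow> real"
    and x c xh :: "nat \<Rightarrow> real^'n"
    and L :: "(real^'n) set"
    and k :: nat
  assumes X_ne: "X \<noteq> {}"
    and X_01: "X \<subseteq> {v. \<forall>i. v $ i = 0 \<or> v $ i = 1}"
    and U_cpt: "compact U" and U_ne: "U \<noteq> {}"
    and k_pos: "1 \<le> k"
    and init: "xh 0 \<in> X" "V 1 = {xh 0}"
    and weights: "\<And>j. 1 \<le> j \<Longrightarrow> j \<le> Suc k \<Longrightarrow>
        (\<forall>v\<in>V j. 0 \<le> \<alpha> j v) \<and> (\<Sum>v\<in>V j. \<alpha> j v) = 1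
        \<and> x j = (\<Sum>v\<in>V j. \<alpha> j v *\<^sub>R v)
        \<and> c j \<in> subdiff (sd_f U) (x j) \<inter> uminus ` normal_cone (convex hull (V j)) (x j)"
    and lmo: "\<And>j. 1 \<le> j \<Longrightarrow> j \<le> k \<Longrightarrow>
        xh j \<in> X \<and> (\<forall>y\<in>X. c j \<bullet> xh j \<le> c j \<bullet> y)"
    and no_stop: "\<And>j. 1 \<le> j \<Longrightarrow> j \<le> k \<Longrightarrow> c j \<bullet> xh j < c j \<bullet> x j"
    and update: "\<And>j. 1 \<le> j \<Longrightarrow> j \<le> k \<Longrightarrow>
        V (Suc j) = {v \<in> V j. 0 < \<alpha> j v} \<union> {xh j}"
    and L_aff: "affine L" and xk_L: "x k \<in> L"
    and diff: "sd_f U differentiable (at (x k) within L)"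
    and dim: "aff_dim (L \<inter> affine hull (V (Suc k))) \<ge> 1"
    and nonorth: "\<exists>d \<in> {y - z | y z. y \<in> L \<inter> affine hull (V (Suc k))
                                   \<and> z \<in> L \<inter> affine hull (V (Suc k))}.
                    \<not> orthogonal (c k) d"
  shows "sd_f U (x (Suc k)) < sd_f U (x k)"
proof -
  let ?f = "sd_f U" and ?S = "{v \<in> V k. 0 < \<alpha> k v}"
  have \<alpha>: "\<forall>v\<in>V k. 0 \<le> \<alpha> k v" "sum (\<alpha> k) (V k) = 1" "x k = (\<Sum>v\<in>V k. \<alpha> k v *\<^sub>R v)"
    and c_sub: "c k \<in> subdiff ?f (x k)"
    and c_cone: "c k \<in> uminus ` normal_cone (convex hull V k) (x k)"
    using weights[of k] k_pos by auto
  note S = convex_combination_support[OF \<alpha>(2,3,1)]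
  have flat: "\<forall>v\<in>?S. c k \<bullet> v = c k \<bullet> x k"
    using inner_eq_on_support[OF \<alpha>] neg_normal_cone_convex_hull_le[OF c_cone] by blast
  have V_Suc: "V (Suc k) = insert (xh k) ?S"
    using update[of k] k_pos by auto
  obtain y z where "y \<in> L" "z \<in> L"
    and yz: "y \<in> affine hull V (Suc k)" "z \<in> affine hull V (Suc k)" "c k \<bullet> (y - z) \<noteq> 0"
    using nonorth by (auto simp: orthogonal_def)
  let ?d = "\<lambda>s. s *\<^sub>R (y - z)"
  obtain s where feasible: "eventually (\<lambda>t. x k + t *\<^sub>R ?d s \<in> convex hull V (Suc k)) (at_right 0)"
    and descent: "c k \<bullet> ?d s < 0"
    using exists_feasible_descent_direction[OF S(1) _ S(2,3) flat _ yz[unfolded V_Suc]]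
      no_stop[of k] k_pos unfolding V_Suc by auto
  have "x k + t *\<^sub>R ?d s \<in> L" for t
    using mem_affine_3_minus[OF L_aff xk_L \<open>y \<in> L\<close> \<open>z \<in> L\<close>, of "t * s"] by simp
  from eventually_descent_along_line[OF diff this c_sub descent] feasible
  obtain t where "x k + t *\<^sub>R ?d s \<in> convex hull V (Suc k)" "?f (x k + t *\<^sub>R ?d s) < ?f (x k)"
    using eventually_happens'[OF trivial_limit_at_right_real eventually_conj] by blast
  moreover have "c (Suc k) \<in> subdiff ?f (x (Suc k))
      \<inter> uminus ` normal_cone (convex hull V (Suc k)) (x (Suc k))"
    using weights[OF _ order_refl, THEN conjunct2, THEN conjunct2, THEN conjunct2] by simp
  ultimately show ?thesis
    using subdiff_neg_normal_cone_minimal by (meson le_less_trans)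
qed

end
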